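(* Let $k$ be a field and let $A$ be a just infinite $k$-algebra which is countably generated as a $k$-algebra and does not satisfy a polynomial identity. Then the extended center $C(A)$ of $A$ is a field extension of $k$ of countable dimension over $k$.
   Context: All rings are associative unital algebras over a field. A $k$-algebra $A$ is called just infinite if $\dim_k(A)=\infty$ and every nonzero two-sided ideal of $A$ has finite codimension in $A$; just infinite algebras are prime. For a prime ring $A$, the (right) Martindale ring of quotients $Q_r(A)$ consists of equivalence classes of pairs $(I,f)$ where $I$ is a nonzero two-sided ideal of $A$ and $f\colon I\to A$ is a right $A$-module homomorphism, two pairs being equivalent if the maps agree on the intersection of their domains; addition is $(I,f)+(J,g)=(I\cap J,f+g)$ and multiplication $(I,f)(J,g)=(JI,f\circ g)$. The extended center $C(A)$ is the center of $Q_r(A)$ (equivalently, classes of pairs $(I,f)$ with $f$ an $(A,A)$-bimodule map); it is a field extension of $k$. *)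

theory Defs
  imports Complex_Main "HOL-Library.Countable_Set"
begin

definition k_algebra :: "('k::field \<Rightarrow> 'a::ring_1 \<Rightarrow> 'a) \<Rightarrow> bool" where
  "k_algebra sc \<longleftrightarrow> vector_space sc \<and>
     (\<forall>c x y. sc c (x * y) = sc c x * y \<and> sc c (x * y) = x * sc c y)"

text \<open>Two-sided ideals (closure under scalars is automatic in a unital algebra).\<close>
definition two_sided_ideal :: "'a::ring_1 set \<Rightarrow> bool" where
  "two_sided_ideal I \<longleftrightarrow> 0 \<in> I \<and> (\<forall>x\<in>I. \<forall>y\<in>I. x + y \<in> I) \<and> (\<forall>x\<in>I. - x \<in> I) \<and>
     (\<forall>x\<in>I. \<forall>a. a * x \<in> I \<and> x * a \<in> I)"

definition infinite_dimensional :: "('k::field \<Rightarrow> 'a::ring_1 \<Rightarrow> 'a) \<Rightarrow> bool" where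
  "infinite_dimensional sc \<longleftrightarrow> \<not> (\<exists>F. finite F \<and> module.span sc F = UNIV)"

text \<open>I has finite codimension: A/I is finite dimensional, i.e. I together with
  finitely many elements spans A.\<close>
definition finite_codim :: "('k::field \<Rightarrow> 'a::ring_1 \<Rightarrow> 'a) \<Rightarrow> 'a set \<Rightarrow> bool" where
  "finite_codim sc I \<longleftrightarrow> (\<exists>F. finite F \<and> module.span sc (I \<union> F) = UNIV)"

definition just_infinite :: "('k::field \<Rightarrow> 'a::ring_1 \<Rightarrow> 'a) \<Rightarrow> bool" where
  "just_infinite sc \<longleftrightarrow> infinite_dimensional sc \<and>
     (\<forall>I. two_sided_ideal I \<and> I \<noteq> {0} \<longrightarrow> finite_codim sc I)"

definition gen_subalgebra :: "('k::field \<Rightarrow> 'a::ring_1 \<Rightarrow> 'a) \<Rightarrow> 'a set \<Rightarrow> 'a set" where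
  "gen_subalgebra sc S = \<Inter>{B. S \<subseteq> B \<and> 1 \<in> B \<and> (\<forall>x\<in>B. \<forall>y\<in>B. x + y \<in> B \<and> x * y \<in> B) \<and>
       (\<forall>c. \<forall>x\<in>B. sc c x \<in> B)}"

definition countably_generated :: "('k::field \<Rightarrow> 'a::ring_1 \<Rightarrow> 'a) \<Rightarrow> bool" where
  "countably_generated sc \<longleftrightarrow> (\<exists>S. countable S \<and> gen_subalgebra sc S = UNIV)"

text \<open>Noncommutative polynomials in the free algebra k<x_0, x_1, ...> are represented
  by their (finitely supported) coefficient functions on words (lists of variable
  indices); evaluation at a substitution sigma of the variables.\<close>
definition nc_eval :: "('k::field \<Rightarrow> 'a::ring_1 \<Rightarrow> 'a) \<Rightarrow> (nat list \<Rightarrow> 'k) \<Rightarrow> (nat \<Rightarrow> 'a) \<Rightarrow> 'a" where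
  "nc_eval sc f \<sigma> = (\<Sum>w\<in>{w. f w \<noteq> 0}. sc (f w) (prod_list (map \<sigma> w)))"

definition satisfies_PI :: "('k::field \<Rightarrow> 'a::ring_1 \<Rightarrow> 'a) \<Rightarrow> bool" where
  "satisfies_PI sc \<longleftrightarrow> (\<exists>f::nat list \<Rightarrow> 'k. finite {w. f w \<noteq> 0} \<and> (\<exists>w. f w \<noteq> 0) \<and>
       (\<forall>\<sigma>. nc_eval sc f \<sigma> = 0))"

text \<open>Representatives of elements of the extended center: pairs (I, f) with I a nonzero
  two-sided ideal and f : I \<rightarrow> A an (A,A)-bimodule map (only its values on I matter).\<close>
definition ext_center_reps :: "('a::ring_1 set \<times> ('a \<Rightarrow> 'a)) set" where
  "ext_center_reps = {(I, f). two_sided_ideal I \<and> I \<noteq> {0} \<and>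
      (\<forall>x\<in>I. \<forall>y\<in>I. f (x + y) = f x + f y) \<and>
      (\<forall>x\<in>I. \<forall>a. f (a * x) = a * f x \<and> f (x * a) = f x * a)}"

text \<open>Here addition and
  k-scaling of classes are computed on representatives ((I,f)+(J,g) = (I\<inter>J, f+g),
  c(I,f) = (I, c f)), and two representatives define the same class iff they agree on the
  intersection of their domains.\<close>
definition ext_center_countable_dim :: "('k::field \<Rightarrow> 'a::ring_1 \<Rightarrow> 'a) \<Rightarrow> bool" where
  "ext_center_countable_dim sc \<longleftrightarrow>
     (\<exists>B. countable B \<and> B \<subseteq> ext_center_reps \<and>
        (\<forall>p\<in>ext_center_reps. \<exists>F c. finite F \<and> F \<subseteq> B \<and>
           (\<forall>x \<in> fst p \<inter> \<Inter>(fst ` F). snd p x = (\<Sum>q\<in>F. sc (c q) (snd q x)))))"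

end

theory Submission
  imports Defs "HOL-Combinatorics.Permutations"
begin

(* Let T_n be the ideal generated by all values of the standard polynomial
   s_n = \<Sum>\<pi> sign \<pi> y_\<pi>(0) ... y_\<pi>(n-1). Since A satisfies no polynomial identity, T_n is nonzero.
   Since s_n is multilinear and alternating, it takes values in any ideal J for which
   A = J + span F with card F < n; hence every nonzero ideal contains some T_n, and every
   element of C(A) is represented by a bimodule map on some T_n. A just infinite algebra is
   prime, so a bimodule map f on T_n is determined by its value at one fixed nonzero x_n in T_n:
   if f x_n = \<Sum> c_i g_i x_n, then (f z - \<Sum> c_i g_i z) a x_n = 0 for all a, hence f = \<Sum> c_i g_i.
   As A has countable dimension, countably many g's suffice to span all these values. *)

lemma (in module) in_span_imageE:
  assumes "x \<in> span (f ` R)"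
  obtains t c where "finite t" "t \<subseteq> R" "x = (\<Sum>r\<in>t. c r *s f r)"
proof -
  obtain t' u where t': "finite t'" "t' \<subseteq> f ` R" and x: "x = (\<Sum>a\<in>t'. u a *s a)"
    using assms unfolding span_explicit by blast
  obtain t where t: "t \<subseteq> R" "inj_on f t" "t' = f ` t"
    using t'(2) subset_image_inj[of t' f R] by blast
  show thesis
  proof (rule that)
    show "finite t"
      using t'(1) t(2,3) finite_image_iff by blast
    show "x = (\<Sum>r\<in>t. u (f r) *s f r)"
      unfolding x t(3) sum.reindex[OF t(2)] by simp
  qed (rule t(1))
qed

lemma (in vector_space) countable_independent_in_span:
  assumes S: "countable S" and G: "independent G" "G \<subseteq> span S"
  shows "countable G"
proof -
  have "G \<subseteq> (\<Union>t\<in>{t. finite t \<and> t \<subseteq> S}. G \<inter> span t)"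
  proof
    fix g assume "g \<in> G"
    then obtain t r where "finite t" "t \<subseteq> S" "g = (\<Sum>a\<in>t. r a *s a)"
      using G(2) unfolding span_explicit by blast
    then show "g \<in> (\<Union>t\<in>{t. finite t \<and> t \<subseteq> S}. G \<inter> span t)"
      using \<open>g \<in> G\<close> by (auto intro: span_sum span_scale span_base)
  qed
  moreover have "finite (G \<inter> span t)" if "finite t" for t
    using independent_span_bound[OF that] independent_mono[OF G(1)] by blast
  then have "countable (\<Union>t\<in>{t. finite t \<and> t \<subseteq> S}. G \<inter> span t)"
    by (intro countable_UN countable_Collect_finite_subset[OF S] countable_finite) auto
  ultimately show ?thesis
    by (rule countable_subset)
qed

lemma (in vector_space) countable_subset_span_image:
  assumes "countable S" "f ` R \<subseteq> span S"
  obtains B where "countable B" "B \<subseteq> R" "f ` R \<subseteq> span (f ` B)"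
proof -
  obtain G where G: "G \<subseteq> f ` R" "independent G" "f ` R \<subseteq> span G"
    by (rule maximal_independent_subset[of "f ` R"])
  obtain B where B: "B \<subseteq> R" "inj_on f B" "G = f ` B"
    using G(1) subset_image_inj[of G f R] by blast
  have "countable G"
    using countable_independent_in_span[OF assms(1) G(2) order_trans[OF G(1) assms(2)]] .
  then have "countable B"
    using B(2,3) countable_image_inj_on by blast
  from \<open>countable B\<close> B(1) show thesis
    by (rule that) (use G(3) B(3) in simp)
qed

section \<open>The standard polynomial\<close>

lemma sum_signed_permutes_eq_0:
  fixes t :: "(nat \<Rightarrow> nat) \<Rightarrow> 'b::ring_1"
  assumes S: "finite S" and pq: "p \<in> S" "q \<in> S" "p \<noteq> q"
    and t_swap: "\<And>\<pi>. \<pi> permutes S \<Longrightarrow> t (transpose p q \<circ> \<pi>) = t \<pi>"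
  shows "(\<Sum>\<pi> | \<pi> permutes S. of_int (sign \<pi>) * t \<pi>) = 0"
proof -
  let ?\<tau> = "transpose p q"
  define Ev where "Ev = {\<pi>. \<pi> permutes S \<and> evenperm \<pi>}"
  define Od where "Od = {\<pi>. \<pi> permutes S \<and> \<not> evenperm \<pi>}"
  have perms: "{\<pi>. \<pi> permutes S} = Ev \<union> Od" "Ev \<inter> Od = {}" and fin: "finite Ev" "finite Od"
    using finite_permutations[OF S] unfolding Ev_def Od_def by auto
  have odd_swap: "evenperm (?\<tau> \<circ> \<pi>) \<longleftrightarrow> \<not> evenperm \<pi>" if "\<pi> permutes S" for \<pi>
  proof -
    have "permutation \<pi>"
      using S that permutation_permutes by blast
    then show ?thesis
      by (simp add: evenperm_comp permutation_swap_id evenperm_swap pq(3))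
  qed
  have swap_swap: "?\<tau> \<circ> (?\<tau> \<circ> \<pi>) = \<pi>" for \<pi>
    by (simp add: fun_eq_iff)
  \<comment> \<open>Pairing odd with even permutations, rather than showing that the sum equals its own
    negative, keeps the argument valid in characteristic 2.\<close>
  have "(\<Sum>\<pi>\<in>Od. of_int (sign \<pi>) * t \<pi>) = (\<Sum>\<pi>\<in>Ev. - t (?\<tau> \<circ> \<pi>))"
    by (rule sum.reindex_bij_witness[of _ "(\<circ>) ?\<tau>" "(\<circ>) ?\<tau>"])
      (auto simp: Ev_def Od_def sign_def odd_swap permutes_compose permutes_swap_id pq swap_swap)
  also have "\<dots> = - (\<Sum>\<pi>\<in>Ev. of_int (sign \<pi>) * t \<pi>)"
    by (simp add: Ev_def sign_def t_swap sum_negf)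
  finally show ?thesis
    unfolding perms(1) sum.union_disjoint[OF fin perms(2)] by simp
qed

lemma prod_list_map_fun_upd:
  fixes y :: "'b \<Rightarrow> 'a::monoid_mult"
  assumes "distinct xs" "p \<in> set xs"
  obtains l r where "\<And>u. prod_list (map (y(p := u)) xs) = l * u * r"
proof -
  obtain ys zs where xs: "xs = ys @ p # zs"
    using split_list[OF assms(2)] by blast
  then have "p \<notin> set ys" "p \<notin> set zs"
    using assms(1) by auto
  then have "prod_list (map (y(p := u)) xs) = prod_list (map y ys) * u * prod_list (map y zs)" for u
    unfolding xs by (simp add: mult.assoc)
  then show thesis
    by (rule that)
qed

definition alternating_on :: "'i set \<Rightarrow> (('i \<Rightarrow> 'a) \<Rightarrow> 'b::zero) \<Rightarrow> bool" where
  "alternating_on P \<Phi> \<longleftrightarrow> (\<forall>p\<in>P. \<forall>q\<in>P. \<forall>y. p \<noteq> q \<longrightarrow> y p = y q \<longrightarrow> \<Phi> y = 0)"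

definition absorbs :: "'a set \<Rightarrow> 'i set \<Rightarrow> (('i \<Rightarrow> 'a) \<Rightarrow> 'a) \<Rightarrow> bool" where
  "absorbs J P \<Phi> \<longleftrightarrow> (\<forall>p\<in>P. \<forall>y. y p \<in> J \<longrightarrow> \<Phi> y \<in> J)"

definition std_poly :: "nat \<Rightarrow> (nat \<Rightarrow> 'a::ring_1) \<Rightarrow> 'a" where
  "std_poly n y = (\<Sum>\<pi> | \<pi> permutes {..<n}. of_int (sign \<pi>) * prod_list (map (y \<circ> \<pi>) [0..<n]))"

lemma std_poly_eq_0_if_eq:
  assumes "p < n" "q < n" "p \<noteq> q" "y p = y q"
  shows "std_poly n y = 0"
  unfolding std_poly_def
proof (rule sum_signed_permutes_eq_0)
  have "y \<circ> transpose p q = y"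
    using assms(4) by (auto simp: fun_eq_iff transpose_def)
  then show "prod_list (map (y \<circ> (transpose p q \<circ> \<pi>)) [0..<n]) = prod_list (map (y \<circ> \<pi>) [0..<n])" for \<pi>
    by (simp add: o_assoc)
qed (use assms in auto)

lemma std_poly_alternating: "alternating_on {..<n} (std_poly n)"
  unfolding alternating_on_def using std_poly_eq_0_if_eq by blast

lemma std_poly_fun_upd:
  fixes y :: "nat \<Rightarrow> 'a::ring_1"
  assumes "p < n"
  obtains l r where
    "\<And>u. std_poly n (y(p := u)) = (\<Sum>\<pi> | \<pi> permutes {..<n}. of_int (sign \<pi>) * (l \<pi> * u * r \<pi>))"
proof -
  have "\<exists>l r. \<forall>u. prod_list (map (y(p := u) \<circ> \<pi>) [0..<n]) = l * u * r" if "\<pi> permutes {..<n}" for \<pi>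
  proof -
    have "distinct (map \<pi> [0..<n])" "p \<in> set (map \<pi> [0..<n])"
      using permutes_inj_on[OF that] permutes_image[OF that] assms
      by (auto simp: distinct_map inj_on_def atLeast0LessThan)
    then show ?thesis
      by (metis prod_list_map_fun_upd map_map)
  qed
  then obtain l r where "\<And>\<pi> u. \<pi> permutes {..<n} \<Longrightarrow> prod_list (map (y(p := u) \<circ> \<pi>) [0..<n]) = l \<pi> * u * r \<pi>"
    by metis
  then show thesis
    by (intro that[of l r]) (simp add: std_poly_def)
qed

definition perm_words :: "nat \<Rightarrow> nat list set" where
  "perm_words n = (\<lambda>\<pi>. map \<pi> [0..<n]) ` {\<pi>. \<pi> permutes {..<n}}"

definition std_poly_coeff :: "nat \<Rightarrow> nat list \<Rightarrow> 'k::field" where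
  "std_poly_coeff n w =
     (if w \<in> perm_words n then of_int (sign (\<lambda>i. if i < n then w ! i else i)) else 0)"

lemma perm_of_perm_word:
  "\<pi> permutes {..<n} \<Longrightarrow> (\<lambda>i. if i < n then map \<pi> [0..<n] ! i else i) = \<pi>"
  by (auto simp: fun_eq_iff permutes_not_in)

lemma inj_on_perm_words: "inj_on (\<lambda>\<pi>. map \<pi> [0..<n]) {\<pi>. \<pi> permutes {..<n}}"
  by (rule inj_onI) (metis mem_Collect_eq perm_of_perm_word)

lemma std_poly_coeff_perm_word:
  "\<pi> permutes {..<n} \<Longrightarrow> std_poly_coeff n (map \<pi> [0..<n]) = of_int (sign \<pi>)"
  unfolding std_poly_coeff_def perm_words_def by (auto simp: perm_of_perm_word)

lemma std_poly_coeff_support: "{w. (std_poly_coeff n w :: 'k::field) \<noteq> 0} = perm_words n"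
proof -
  have "(of_int (sign \<pi>) :: 'k) \<noteq> 0" for \<pi>
    by (simp add: sign_def)
  then show ?thesis
    unfolding std_poly_coeff_def by auto
qed

section \<open>Ideals and bimodule maps\<close>

lemma two_sided_ideal_mult_left: "two_sided_ideal I \<Longrightarrow> x \<in> I \<Longrightarrow> a * x \<in> I"
  and two_sided_ideal_mult_right: "two_sided_ideal I \<Longrightarrow> x \<in> I \<Longrightarrow> x * a \<in> I"
  and two_sided_ideal_zero: "two_sided_ideal I \<Longrightarrow> 0 \<in> I"
  and two_sided_ideal_Int: "two_sided_ideal I \<Longrightarrow> two_sided_ideal J \<Longrightarrow> two_sided_ideal (I \<inter> J)"
  unfolding two_sided_ideal_def by blast+

definition bimodule_map_on :: "'a::ring_1 set \<Rightarrow> ('a \<Rightarrow> 'a) \<Rightarrow> bool" where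
  "bimodule_map_on K f \<longleftrightarrow> (\<forall>x\<in>K. \<forall>a. f (a * x) = a * f x \<and> f (x * a) = f x * a)"

lemma bimodule_map_on_mult:
  assumes "bimodule_map_on K f" "z \<in> K" "x \<in> K"
  shows "f z * a * x = z * a * f x"
proof -
  have "f z * a * x = f (z * (a * x))"
    using assms(1,2) by (simp add: bimodule_map_on_def mult.assoc)
  also have "\<dots> = z * a * f x"
    using assms(1,3) by (simp add: bimodule_map_on_def mult.assoc[symmetric])
  finally show ?thesis .
qed

lemma bimodule_map_on_subset: "bimodule_map_on K f \<Longrightarrow> K' \<subseteq> K \<Longrightarrow> bimodule_map_on K' f"
  unfolding bimodule_map_on_def by blast

lemma ext_center_reps_iff:
  "(I, f) \<in> ext_center_reps \<longleftrightarrow> two_sided_ideal I \<and> I \<noteq> {0} \<and>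
     (\<forall>x\<in>I. \<forall>y\<in>I. f (x + y) = f x + f y) \<and> bimodule_map_on I f"
  unfolding ext_center_reps_def bimodule_map_on_def by simp

locale algebra_over_field = vector_space scale
  for scale :: "'k::field \<Rightarrow> 'a::ring_1 \<Rightarrow> 'a" (infixr \<open>*s\<close> 75) +
  assumes scale_mult_left: "c *s (x * y) = (c *s x) * y"
    and scale_mult_right: "c *s (x * y) = x * (c *s y)"
begin

lemma mult_in_span:
  assumes x: "x \<in> span M" and y: "y \<in> span N"
    and MN: "\<And>m n. m \<in> M \<Longrightarrow> n \<in> N \<Longrightarrow> m * n \<in> span P"
  shows "x * y \<in> span P"
proof -
  have left: "m * z \<in> span P" if "m \<in> M" "z \<in> span N" for m z
    using that(2)
  proof (induction rule: span_induct)
    case base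
    show ?case
      by (rule subspaceI) (auto simp: distrib_left span_add span_zero scale_mult_right[symmetric] span_scale)
  next
    case (step n)
    then show ?case using MN that(1) by blast
  qed
  have "\<forall>z\<in>span N. x * z \<in> span P"
    using x
  proof (induction rule: span_induct)
    case base
    show ?case
      by (rule subspaceI) (auto simp: distrib_right span_add span_zero scale_mult_left[symmetric] span_scale)
  next
    case (step m)
    then show ?case using left by blast
  qed
  then show ?thesis using y by blast
qed

lemma two_sided_ideal_subspace: "two_sided_ideal J \<Longrightarrow> subspace J"
  unfolding two_sided_ideal_def
  by (rule subspaceI) (auto, metis mult.right_neutral scale_mult_right)

lemma span_two_sided_ideal: "two_sided_ideal J \<Longrightarrow> span J = J"
  using two_sided_ideal_subspace span_eq_iff by blast

definition ideal_generated :: "'a set \<Rightarrow> 'a set" where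
  "ideal_generated M = span {a * m * b | a m b. m \<in> M}"

lemma two_sided_ideal_ideal_generated: "two_sided_ideal (ideal_generated M)"
proof -
  define G where "G = {a * m * b | a m b. m \<in> M}"
  have closed: "c * n \<in> G" "n * c \<in> G" if n: "n \<in> G" for c n
  proof -
    obtain a m b where "n = a * m * b" "m \<in> M"
      using n unfolding G_def by blast
    then have "c * n = (c * a) * m * b" "n * c = a * m * (b * c)" "m \<in> M"
      by (simp_all add: mult.assoc)
    then show "c * n \<in> G" "n * c \<in> G"
      unfolding G_def by blast+
  qed
  have "c * x \<in> span G" if "x \<in> span G" for c x
    by (rule mult_in_span[OF span_base[of c "{c}"] that]) (auto intro: span_base closed)
  moreover have "x * c \<in> span G" if "x \<in> span G" for c x
    by (rule mult_in_span[OF that span_base[of c "{c}"]]) (auto intro: span_base closed)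
  ultimately show ?thesis
    using subspace_span[of G] unfolding two_sided_ideal_def ideal_generated_def G_def[symmetric]
    by (simp add: subspace_0 subspace_add subspace_neg)
qed

lemma subset_ideal_generated: "M \<subseteq> ideal_generated M"
proof
  fix m assume "m \<in> M"
  then have "1 * m * 1 \<in> {a * m * b | a m b. m \<in> M}"
    by blast
  then show "m \<in> ideal_generated M"
    unfolding ideal_generated_def mult_1_left mult_1_right by (rule span_base)
qed

lemma ideal_generated_minimal:
  assumes J: "two_sided_ideal J" and "M \<subseteq> J"
  shows "ideal_generated M \<subseteq> J"
proof -
  have "a * m * b \<in> J" if "m \<in> M" for a m b
    using that assms two_sided_ideal_mult_left two_sided_ideal_mult_right by blast
  then have "{a * m * b | a m b. m \<in> M} \<subseteq> J"
    by blast
  then show ?thesis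
    unfolding ideal_generated_def using span_mono span_two_sided_ideal[OF J] by blast
qed

section \<open>Just infinite algebras are prime\<close>

lemma annihilated_by_ideal_eq_0:
  fixes J :: "'a set"
  assumes JI: "just_infinite scale" and J: "two_sided_ideal J" "J \<noteq> {0}"
    and ann: "\<And>j. j \<in> J \<Longrightarrow> j * y = 0 \<and> y * j = 0"
  shows "y = 0"
proof (rule ccontr)
  assume "y \<noteq> 0"
  obtain F :: "'a set" where F: "finite F" "span (J \<union> F) = UNIV"
    using JI J unfolding just_infinite_def finite_codim_def by blast
  \<comment> \<open>As A = J + span F and J y = y J = 0, the ideal A y A is spanned by the finite set W;
    but it also has finite codimension.\<close>
  define W where "W = (\<lambda>(f, g). f * y * g) ` (F \<times> F)"
  have generators: "a * y * b \<in> span W" for a b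
  proof -
    have ay: "a * y \<in> span ((\<lambda>f. f * y) ` F)"
      by (rule mult_in_span[of a "J \<union> F" y "{y}"]) (use F(2) ann in \<open>auto intro: span_base span_zero\<close>)
    have fyn: "f * y * n \<in> span W" if "f \<in> F" "n \<in> J \<union> F" for f n
    proof (cases "n \<in> J")
      case True
      then show ?thesis
        using ann span_zero by (simp add: mult.assoc)
    next
      case False
      then show ?thesis
        using that unfolding W_def by (intro span_base) force
    qed
    show ?thesis
      by (rule mult_in_span[OF ay, of b "J \<union> F"]) (use F(2) fyn in auto)
  qed
  have W: "ideal_generated {y} \<subseteq> span W"
    unfolding ideal_generated_def by (rule span_minimal) (use generators in blast, simp)
  have "ideal_generated {y} \<noteq> {0}"
    using subset_ideal_generated[of "{y}"] \<open>y \<noteq> 0\<close> by blast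
  then obtain F' :: "'a set" where F': "finite F'" "span (ideal_generated {y} \<union> F') = UNIV"
    using JI two_sided_ideal_ideal_generated unfolding just_infinite_def finite_codim_def by blast
  have "ideal_generated {y} \<union> F' \<subseteq> span (W \<union> F')"
    using W span_mono[of W "W \<union> F'"] span_superset[of "W \<union> F'"] by blast
  then have "span (ideal_generated {y} \<union> F') \<subseteq> span (W \<union> F')"
    by (rule span_minimal[OF _ subspace_span])
  then have "span (W \<union> F') = UNIV"
    using F'(2) by auto
  moreover have "finite (W \<union> F')"
    using F(1) F'(1) by (simp add: W_def)
  ultimately show False
    using JI unfolding just_infinite_def infinite_dimensional_def by blast
qed

lemma just_infinite_prime:
  fixes w x :: 'a
  assumes JI: "just_infinite scale" and wx: "\<And>a. w * a * x = 0"
  shows "w = 0 \<or> x = 0"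
proof (rule ccontr)
  assume "\<not> (w = 0 \<or> x = 0)"
  then have "w \<noteq> 0" "x \<noteq> 0" by auto
  define I where "I = ideal_generated {w}"
  define J where "J = ideal_generated {x}"
  have I: "two_sided_ideal I" and J: "two_sided_ideal J"
    unfolding I_def J_def by (rule two_sided_ideal_ideal_generated)+
  have "w \<in> I" "x \<in> J"
    unfolding I_def J_def using subset_ideal_generated by blast+
  have IJ: "u * v = 0" if "u \<in> I" "v \<in> J" for u v
  proof -
    have "u * v \<in> span {}"
    proof (rule mult_in_span[OF that[unfolded I_def J_def ideal_generated_def]])
      fix m n assume "m \<in> {a * m * b | a m b. m \<in> {w}}" "n \<in> {a * m * b | a m b. m \<in> {x}}"
      then obtain a b c d where "m = a * w * b" "n = c * x * d"
        by blast
      then have "m * n = a * (w * (b * c) * x) * d"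
        by (simp add: mult.assoc)
      then show "m * n \<in> span {}"
        using wx by (simp add: span_zero)
    qed
    then show ?thesis
      by simp
  qed
  \<comment> \<open>As I J = 0, either J or I \<inter> J is a nonzero ideal annihilating a nonzero element
    from both sides.\<close>
  show False
  proof (cases "I \<inter> J = {0}")
    case True
    have "w = 0"
    proof (rule annihilated_by_ideal_eq_0[OF JI J])
      show "J \<noteq> {0}"
        using \<open>x \<in> J\<close> \<open>x \<noteq> 0\<close> by blast
      fix j assume "j \<in> J"
      then have "j * w \<in> I \<inter> J"
        using two_sided_ideal_mult_left[OF I \<open>w \<in> I\<close>] two_sided_ideal_mult_right[OF J] by blast
      then show "j * w = 0 \<and> w * j = 0"
        using True IJ \<open>w \<in> I\<close> \<open>j \<in> J\<close> by blast
    qed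
    then show False
      using \<open>w \<noteq> 0\<close> by blast
  next
    case False
    then obtain y where y: "y \<in> I" "y \<in> J" "y \<noteq> 0"
      using two_sided_ideal_zero[OF I] two_sided_ideal_zero[OF J] by blast
    have "y = 0"
      by (rule annihilated_by_ideal_eq_0[OF JI two_sided_ideal_Int[OF I J] False])
        (use IJ y in blast)
    then show False
      using y(3) by blast
  qed
qed

lemma bimodule_map_on_sum:
  assumes "\<And>v. v \<in> t \<Longrightarrow> bimodule_map_on K (g v)"
  shows "bimodule_map_on K (\<lambda>z. \<Sum>v\<in>t. c v *s g v z)"
  using assms unfolding bimodule_map_on_def
  by (simp add: sum_distrib_left sum_distrib_right scale_mult_left scale_mult_right[symmetric])

lemma bimodule_maps_eq_if_eq_at:
  fixes f h :: "'a \<Rightarrow> 'a"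
  assumes JI: "just_infinite scale" and f: "bimodule_map_on K f" and h: "bimodule_map_on K h"
    and x: "x \<in> K" "x \<noteq> 0" "f x = h x" and z: "z \<in> K"
  shows "f z = h z"
proof -
  have "(f z - h z) * a * x = 0" for a
    using bimodule_map_on_mult[OF f z x(1)] bimodule_map_on_mult[OF h z x(1)] x(3)
    by (simp add: left_diff_distrib)
  then show ?thesis
    using just_infinite_prime[OF JI, of "f z - h z" x] x(2) by simp
qed

section \<open>Standard polynomials and ideals of finite codimension\<close>

definition multilinear_on :: "'i set \<Rightarrow> (('i \<Rightarrow> 'a) \<Rightarrow> 'a) \<Rightarrow> bool" where
  "multilinear_on P \<Phi> \<longleftrightarrow> (\<forall>p\<in>P. \<forall>y u v c.
      \<Phi> (y(p := u + v)) = \<Phi> (y(p := u)) + \<Phi> (y(p := v)) \<and> \<Phi> (y(p := c *s u)) = c *s \<Phi> (y(p := u)))"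

lemma multilinear_alternating_expand:
  assumes ml: "multilinear_on P \<Phi>" and al: "alternating_on P \<Phi>" and Q: "finite Q" "Q \<subseteq> P"
    and yz: "\<And>p. y p = z p + c p *s f"
  shows "\<Phi> y = \<Phi> (\<lambda>p. if p \<in> Q then z p else y p)
     + (\<Sum>i\<in>Q. c i *s \<Phi> ((\<lambda>p. if p \<in> Q then z p else y p)(i := f)))"
  using Q
proof (induction Q rule: finite_induct)
  case empty
  then show ?case by simp
next
  case (insert j Q)
  define w where "w = (\<lambda>p. if p \<in> Q then z p else y p)"
  define w' where "w' = (\<lambda>p. if p \<in> insert j Q then z p else y p)"
  have j: "j \<in> P" "j \<notin> Q" and QP: "Q \<subseteq> P"
    using insert by auto
  have w_j: "w = w'(j := z j + c j *s f)" and w'_j: "w' = w'(j := z j)"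
    unfolding w_def w'_def using j(2) yz by (auto simp: fun_eq_iff)
  have first: "\<Phi> w = \<Phi> w' + c j *s \<Phi> (w'(j := f))"
    using ml j(1) unfolding multilinear_on_def w_j by (metis w'_j)
  have rest: "\<Phi> (w(i := f)) = \<Phi> (w'(i := f))" if "i \<in> Q" for i
  proof -
    have i: "i \<in> P" "i \<noteq> j"
      using that j QP by auto
    have "w(i := f) = (w'(i := f))(j := z j + c j *s f)" "w'(i := f) = (w'(i := f))(j := z j)"
      unfolding w_def w'_def using j(2) yz i(2) that by (auto simp: fun_eq_iff)
    moreover have "\<Phi> ((w'(i := f))(j := f)) = 0"
      using al i j(1) unfolding alternating_on_def by (metis fun_upd_same fun_upd_twist)
    ultimately show ?thesis
      using ml j(1) unfolding multilinear_on_def by (metis add_0_right scale_zero_right)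
  qed
  have "\<Phi> y = \<Phi> w + (\<Sum>i\<in>Q. c i *s \<Phi> (w(i := f)))"
    using insert.IH[OF QP] unfolding w_def .
  also have "\<dots> = \<Phi> w' + c j *s \<Phi> (w'(j := f)) + (\<Sum>i\<in>Q. c i *s \<Phi> (w'(i := f)))"
    unfolding first using rest by simp
  also have "\<dots> = \<Phi> w' + (\<Sum>i\<in>insert j Q. c i *s \<Phi> (w'(i := f)))"
    using insert(1,2) by (simp add: add.assoc)
  finally show ?case
    unfolding w'_def .
qed

lemma multilinear_alternating_in_ideal:
  fixes J F :: "'a set"
  assumes J: "two_sided_ideal J" and F: "finite F"
    and P: "finite P" "card F < card P"
    and \<Phi>: "multilinear_on P \<Phi>" "alternating_on P \<Phi>" "absorbs J P \<Phi>"
    and y: "\<And>p. p \<in> P \<Longrightarrow> y p \<in> span (J \<union> F)"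
  shows "\<Phi> y \<in> J"
  using F P \<Phi> y
  \<comment> \<open>Splitting f off every argument leaves, besides a term covered by the induction
    hypothesis, only terms with f in a single slot i; in the other card P - 1 > card F slots
    these are again multilinear and alternating.\<close>
proof (induction F arbitrary: P \<Phi> y rule: finite_induct)
  case empty
  then obtain p where "p \<in> P"
    by fastforce
  then have "y p \<in> J"
    using empty.prems(6) span_two_sided_ideal[OF J] by simp
  then show ?case
    using empty.prems(5) \<open>p \<in> P\<close> unfolding absorbs_def by blast
next
  case (insert f F)
  have card: "card F < card (P - {i})" if "i \<in> P" for i
    using insert.hyps(1,2) insert.prems(1,2) that by simp
  obtain c where c: "y p - c p *s f \<in> span (J \<union> F)" if "p \<in> P" for p
    using insert.prems(6) span_breakdown_eq[of _ f "J \<union> F"] by simp metis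
  define z where "z p = y p - c p *s f" for p
  define w where "w = (\<lambda>p. if p \<in> P then z p else y p)"
  have w: "w p \<in> span (J \<union> F)" if "p \<in> P" for p
    unfolding w_def z_def using c that by simp
  have "\<Phi> y = \<Phi> w + (\<Sum>i\<in>P. c i *s \<Phi> (w(i := f)))"
    unfolding w_def by (rule multilinear_alternating_expand) (use insert.prems z_def in auto)
  moreover have "\<Phi> w \<in> J"
    using insert.IH[of P \<Phi> w] insert.prems card w by fastforce
  moreover have "\<Phi> (w(i := f)) \<in> J" if i: "i \<in> P" for i
  proof -
    define \<Psi> where "\<Psi> v = \<Phi> (v(i := f))" for v
    have "multilinear_on (P - {i}) \<Psi>"
      using insert.prems(3) unfolding multilinear_on_def \<Psi>_def by (metis DiffE fun_upd_twist insertI1)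
    moreover have "alternating_on (P - {i}) \<Psi>"
      using insert.prems(4) unfolding alternating_on_def \<Psi>_def
      by (metis (no_types, lifting) DiffD1 DiffD2 fun_upd_apply insertI1)
    moreover have "absorbs J (P - {i}) \<Psi>"
      using insert.prems(5) unfolding absorbs_def \<Psi>_def by (metis DiffE fun_upd_apply insertI1)
    ultimately have "\<Psi> w \<in> J"
      using insert.IH[of "P - {i}" \<Psi> w] insert.prems(1) card[OF i] w by simp
    then show ?thesis
      unfolding \<Psi>_def .
  qed
  ultimately show ?case
    using two_sided_ideal_subspace[OF J]
    by (simp add: subspace_add subspace_sum subspace_scale)
qed

lemma std_poly_multilinear: "multilinear_on {..<n} (std_poly n)"
  unfolding multilinear_on_def
proof (intro ballI allI conjI)
  fix p c and y :: "nat \<Rightarrow> 'a" and u v :: 'a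
  assume "p \<in> {..<n}"
  then obtain l r where lr:
    "\<And>u. std_poly n (y(p := u)) = (\<Sum>\<pi> | \<pi> permutes {..<n}. of_int (sign \<pi>) * (l \<pi> * u * r \<pi>))"
    using std_poly_fun_upd by blast
  show "std_poly n (y(p := u + v)) = std_poly n (y(p := u)) + std_poly n (y(p := v))"
    unfolding lr by (simp add: distrib_left distrib_right sum.distrib)
  have "c *s (a * (b * u * d)) = a * (b * (c *s u) * d)" for a b d
    by (metis scale_mult_left scale_mult_right)
  then show "std_poly n (y(p := c *s u)) = c *s std_poly n (y(p := u))"
    unfolding lr by (simp add: scale_sum_right)
qed

lemma std_poly_absorbs:
  fixes J :: "'a set"
  assumes J: "two_sided_ideal J"
  shows "absorbs J {..<n} (std_poly n)"
  unfolding absorbs_def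
proof (intro ballI allI impI)
  fix p and y :: "nat \<Rightarrow> 'a"
  assume "p \<in> {..<n}" "y p \<in> J"
  then obtain l r where lr:
    "\<And>u. std_poly n (y(p := u)) = (\<Sum>\<pi> | \<pi> permutes {..<n}. of_int (sign \<pi>) * (l \<pi> * u * r \<pi>))"
    using std_poly_fun_upd by blast
  have "std_poly n y = std_poly n (y(p := y p))"
    by simp
  also have "\<dots> \<in> J"
    unfolding lr using \<open>y p \<in> J\<close>
    by (intro subspace_sum[OF two_sided_ideal_subspace[OF J]])
      (simp add: J two_sided_ideal_mult_left two_sided_ideal_mult_right)
  finally show "std_poly n y \<in> J" .
qed

lemma nc_eval_std_poly_coeff: "nc_eval scale (std_poly_coeff n) \<sigma> = std_poly n \<sigma>"
proof -
  have "nc_eval scale (std_poly_coeff n) \<sigma> = (\<Sum>w\<in>perm_words n. std_poly_coeff n w *s prod_list (map \<sigma> w))"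
    unfolding nc_eval_def std_poly_coeff_support ..
  also have "\<dots> = (\<Sum>\<pi> | \<pi> permutes {..<n}. of_int (sign \<pi>) *s prod_list (map (\<sigma> \<circ> \<pi>) [0..<n]))"
    unfolding perm_words_def sum.reindex[OF inj_on_perm_words]
    by (intro sum.cong) (simp_all add: std_poly_coeff_perm_word)
  also have "\<dots> = std_poly n \<sigma>"
    unfolding std_poly_def
    by (intro sum.cong refl) (auto simp: sign_def scale_minus_left)
  finally show ?thesis .
qed

lemma std_poly_nonzero_if_not_PI:
  assumes "\<not> satisfies_PI scale"
  obtains \<sigma> :: "nat \<Rightarrow> 'a" where "std_poly n \<sigma> \<noteq> 0"
proof -
  have "finite {w. (std_poly_coeff n w :: 'k) \<noteq> 0}"
    unfolding std_poly_coeff_support perm_words_def by (simp add: finite_permutations)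
  moreover have "map id [0..<n] \<in> {w. (std_poly_coeff n w :: 'k) \<noteq> 0}"
    unfolding std_poly_coeff_support perm_words_def using permutes_id by blast
  ultimately have "\<not> (\<forall>\<sigma>. nc_eval scale (std_poly_coeff n :: nat list \<Rightarrow> 'k) \<sigma> = 0)"
    using assms unfolding satisfies_PI_def by blast
  then show thesis
    using that unfolding nc_eval_std_poly_coeff by blast
qed

definition std_ideal :: "nat \<Rightarrow> 'a set" where
  "std_ideal n = ideal_generated (range (std_poly n))"

lemma two_sided_ideal_std_ideal: "two_sided_ideal (std_ideal n)"
  unfolding std_ideal_def by (rule two_sided_ideal_ideal_generated)

lemma std_ideal_nonzero: "\<not> satisfies_PI scale \<Longrightarrow> std_ideal n \<noteq> {0}"
  using std_poly_nonzero_if_not_PI[of n] subset_ideal_generated[of "range (std_poly n)"]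
  unfolding std_ideal_def by blast

lemma std_ideal_subset:
  fixes J F :: "'a set"
  assumes J: "two_sided_ideal J" and F: "finite F" "span (J \<union> F) = UNIV"
  shows "std_ideal (Suc (card F)) \<subseteq> J"
proof -
  have "std_poly (Suc (card F)) y \<in> J" for y
    by (rule multilinear_alternating_in_ideal[OF J F(1), of "{..<Suc (card F)}"])
      (simp_all add: F(2) std_poly_multilinear std_poly_alternating std_poly_absorbs[OF J])
  then show ?thesis
    unfolding std_ideal_def by (intro ideal_generated_minimal[OF J]) blast
qed

section \<open>The extended center\<close>

lemma countably_generated_countable_span:
  assumes "countably_generated scale"
  obtains S :: "'a set" where "countable S" "span S = UNIV"
proof -
  obtain S :: "'a set" where S: "countable S" "gen_subalgebra scale S = UNIV"
    using assms unfolding countably_generated_def by blast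
  define M where "M = prod_list ` lists S"
  have "x * y \<in> span M" if "x \<in> span M" "y \<in> span M" for x y
  proof (rule mult_in_span[OF that])
    fix m n assume "m \<in> M" "n \<in> M"
    then obtain xs ys where "xs \<in> lists S" "ys \<in> lists S" "m = prod_list xs" "n = prod_list ys"
      unfolding M_def by blast
    then have "m * n \<in> M"
      unfolding M_def by (auto intro!: image_eqI[of _ _ "xs @ ys"])
    then show "m * n \<in> span M"
      by (rule span_base)
  qed
  moreover have "S \<subseteq> span M" "1 \<in> span M"
    using image_eqI[of _ prod_list "[]" "lists S"] image_eqI[of _ prod_list "[s]" "lists S" for s]
    unfolding M_def by (auto intro: span_base)
  ultimately have "gen_subalgebra scale S \<subseteq> span M"
    unfolding gen_subalgebra_def by (intro Inter_lower) (auto simp: span_add span_scale)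
  then show thesis
    using that[of M] S unfolding M_def by auto
qed

lemma std_ideal_countable_reps:
  assumes "countably_generated scale" and "\<not> satisfies_PI scale"
  obtains x B where "\<And>n. x n \<in> std_ideal n" "\<And>n. x n \<noteq> 0" "\<And>n. countable (B n)"
    "\<And>n g. g \<in> B n \<Longrightarrow> (std_ideal n, g) \<in> ext_center_reps"
    "\<And>n g. (std_ideal n, g) \<in> ext_center_reps \<Longrightarrow> g (x n) \<in> span ((\<lambda>g. g (x n)) ` B n)"
proof -
  obtain S :: "'a set" where S: "countable S" "span S = UNIV"
    using countably_generated_countable_span[OF assms(1)] .
  have "\<forall>n. \<exists>x. x \<in> std_ideal n \<and> x \<noteq> 0"
    using std_ideal_nonzero[OF assms(2)] two_sided_ideal_zero[OF two_sided_ideal_std_ideal] by blast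
  then obtain x where "\<forall>n. x n \<in> std_ideal n \<and> x n \<noteq> 0"
    by (rule exE[OF choice])
  then have x: "\<And>n. x n \<in> std_ideal n" "\<And>n. x n \<noteq> 0"
    by blast+
  define R where "R n = {g. (std_ideal n, g) \<in> ext_center_reps}" for n
  have "\<forall>n. \<exists>B. countable B \<and> B \<subseteq> R n \<and> (\<lambda>g. g (x n)) ` R n \<subseteq> span ((\<lambda>g. g (x n)) ` B)"
  proof
    fix n
    obtain B where "countable B" "B \<subseteq> R n" "(\<lambda>g. g (x n)) ` R n \<subseteq> span ((\<lambda>g. g (x n)) ` B)"
      by (rule countable_subset_span_image[OF S(1), of "\<lambda>g. g (x n)" "R n"]) (auto simp: S(2))
    then show "\<exists>B. countable B \<and> B \<subseteq> R n \<and> (\<lambda>g. g (x n)) ` R n \<subseteq> span ((\<lambda>g. g (x n)) ` B)"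
      by blast
  qed
  then obtain B where "\<forall>n. countable (B n) \<and> B n \<subseteq> R n \<and>
      (\<lambda>g. g (x n)) ` R n \<subseteq> span ((\<lambda>g. g (x n)) ` B n)"
    by (rule exE[OF choice])
  then have B: "\<And>n. countable (B n)" "\<And>n. B n \<subseteq> R n"
    "\<And>n. (\<lambda>g. g (x n)) ` R n \<subseteq> span ((\<lambda>g. g (x n)) ` B n)"
    by blast+
  show thesis
  proof (rule that[OF x B(1)])
    show "(std_ideal n, g) \<in> ext_center_reps" if "g \<in> B n" for n g
      using B(2) that unfolding R_def by blast
    show "g (x n) \<in> span ((\<lambda>g. g (x n)) ` B n)" if "(std_ideal n, g) \<in> ext_center_reps" for n g
      using B(3) that unfolding R_def by blast
  qed
qed

lemma ext_center_rep_in_span: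
  fixes f :: "'a \<Rightarrow> 'a"
  assumes JI: "just_infinite scale" and f: "(J, f) \<in> ext_center_reps"
    and x: "T \<subseteq> J" "x \<in> T" "x \<noteq> 0"
    and B: "\<And>g. g \<in> B \<Longrightarrow> (T, g) \<in> ext_center_reps"
    and fx: "f x \<in> span ((\<lambda>g. g x) ` B)"
  shows "\<exists>F c. finite F \<and> F \<subseteq> Pair T ` B \<and>
    (\<forall>z\<in>J \<inter> \<Inter>(fst ` F). f z = (\<Sum>q\<in>F. c q *s snd q z))"
proof -
  obtain t c where t: "finite t" "t \<subseteq> B" and fx_sum: "f x = (\<Sum>g\<in>t. c g *s g x)"
    using fx by (rule in_span_imageE)
  define h where "h z = (\<Sum>g\<in>t. c g *s g z)" for z
  define K where "K = J \<inter> \<Inter>(fst ` Pair T ` t)"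
  have K: "K \<subseteq> J" "x \<in> K" "\<And>g. g \<in> t \<Longrightarrow> K \<subseteq> T"
    unfolding K_def using x by auto
  have "bimodule_map_on J f"
    using f by (simp add: ext_center_reps_iff)
  then have fK: "bimodule_map_on K f"
    using K(1) by (rule bimodule_map_on_subset)
  have "bimodule_map_on K g" if "g \<in> t" for g
  proof -
    have "bimodule_map_on T g"
      using B t(2) that by (simp add: ext_center_reps_iff subset_iff)
    then show ?thesis
      using K(3)[OF that] by (rule bimodule_map_on_subset)
  qed
  then have hK: "bimodule_map_on K h"
    unfolding h_def by (rule bimodule_map_on_sum)
  have eq: "f z = h z" if "z \<in> K" for z
    by (rule bimodule_maps_eq_if_eq_at[OF JI fK hK K(2) x(3) _ that]) (simp add: h_def fx_sum)
  have reindex: "h z = (\<Sum>q\<in>Pair T ` t. c (snd q) *s snd q z)" for z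
    unfolding h_def by (simp add: sum.reindex inj_on_def)
  show ?thesis
  proof (intro exI conjI)
    show "finite (Pair T ` t)" "Pair T ` t \<subseteq> Pair T ` B"
      using t by auto
    show "\<forall>z\<in>J \<inter> \<Inter>(fst ` Pair T ` t). f z = (\<Sum>q\<in>Pair T ` t. c (snd q) *s snd q z)"
      using eq reindex unfolding K_def by simp
  qed
qed

theorem countable_dim_ext_center:
  assumes JI: "just_infinite scale" and CG: "countably_generated scale"
    and NPI: "\<not> satisfies_PI scale"
  shows "ext_center_countable_dim scale"
proof -
  obtain x B where x: "\<And>n. x n \<in> std_ideal n" "\<And>n. x n \<noteq> 0" and B: "\<And>n. countable (B n)"
    "\<And>n g. g \<in> B n \<Longrightarrow> (std_ideal n, g) \<in> ext_center_reps"
    "\<And>n g. (std_ideal n, g) \<in> ext_center_reps \<Longrightarrow> g (x n) \<in> span ((\<lambda>g. g (x n)) ` B n)"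
    using std_ideal_countable_reps[OF CG NPI] by metis
  define Basis where "Basis = (\<Union>n. Pair (std_ideal n) ` B n)"
  have Basis: "countable Basis" "Basis \<subseteq> ext_center_reps"
    unfolding Basis_def using B(1,2) by (blast intro: countable_UN countable_image)+
  have spanned: "\<exists>F c. finite F \<and> F \<subseteq> Basis \<and>
      (\<forall>z\<in>J \<inter> \<Inter>(fst ` F). f z = (\<Sum>q\<in>F. c q *s snd q z))"
    if Jf: "(J, f) \<in> ext_center_reps" for J f
  proof -
    have J: "two_sided_ideal J" "J \<noteq> {0}" and fJ: "bimodule_map_on J f"
      using Jf by (simp_all add: ext_center_reps_iff)
    then obtain V :: "'a set" where V: "finite V" "span (J \<union> V) = UNIV"
      using JI unfolding just_infinite_def finite_codim_def by blast
    define n where "n = Suc (card V)"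
    have T: "std_ideal n \<subseteq> J"
      unfolding n_def by (rule std_ideal_subset[OF J(1) V])
    have fT: "(std_ideal n, f) \<in> ext_center_reps"
      using Jf bimodule_map_on_subset[OF fJ T] two_sided_ideal_std_ideal std_ideal_nonzero[OF NPI] T
      by (simp add: ext_center_reps_iff subset_iff)
    obtain F c where F: "finite F" "F \<subseteq> Pair (std_ideal n) ` B n"
      "\<forall>z\<in>J \<inter> \<Inter>(fst ` F). f z = (\<Sum>q\<in>F. c q *s snd q z)"
      using ext_center_rep_in_span[OF JI Jf T x(1)[of n] x(2)[of n] B(2)[of _ n] B(3)[OF fT]] by blast
    moreover have "F \<subseteq> Basis"
      using F(2) unfolding Basis_def by blast
    ultimately show ?thesis
      by blast
  qed
  have "\<forall>p\<in>ext_center_reps. \<exists>F c. finite F \<and> F \<subseteq> Basis \<and>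
      (\<forall>z\<in>fst p \<inter> \<Inter>(fst ` F). snd p z = (\<Sum>q\<in>F. c q *s snd q z))"
    using spanned by fastforce
  then show ?thesis
    using Basis unfolding ext_center_countable_dim_def by blast
qed

end

theorem proposition6p2:
  fixes sc :: "'k::field \<Rightarrow> 'a::ring_1 \<Rightarrow> 'a"
  assumes "k_algebra sc"
    and "just_infinite sc"
    and "countably_generated sc"
    and "\<not> satisfies_PI sc"
  shows "ext_center_countable_dim sc"
proof -
  interpret algebra_over_field sc
    using assms(1) unfolding k_algebra_def algebra_over_field_def algebra_over_field_axioms_def
    by blast
  show ?thesis
    using countable_dim_ext_center assms(2-4) .
qed

end
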